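(* Let $\mathbf{AUS}_3$ be the set of density matrices $\sigma$ on $\mathbb{C}^2\otimes\mathbb{C}^2$ such that for every unitary $U$ on $\mathbb{C}^2\otimes\mathbb{C}^2$, every choice of unit vectors $\hat u_1,\hat u_2,\hat u_3\in\mathbb{R}^3$ and every choice of orthonormal vectors $\hat v_1,\hat v_2,\hat v_3\in\mathbb{R}^3$, $$\frac{1}{\sqrt3}\Big|\sum_{i=1}^3\mathrm{Tr}\big(U\sigma U^\dagger\,(\hat u_i\cdot\vec s)\otimes(\hat v_i\cdot\vec s)\big)\Big|\le 1.$$ Write a two-qubit state as $\sigma=\frac14\big(I\otimes I+\vec e\cdot\vec s\otimes I+I\otimes\vec f\cdot\vec s+\sum_{i,j=1}^3 g_{ij}\,s_i\otimes s_j\big)$ with $\vec e,\vec f\in\mathbb{R}^3$ and $G=[g_{ij}]$ a real $3\times3$ matrix. Then $\sigma\in\mathbf{AUS}_3$ if and only if $$\frac14\big(1+\|\vec e\|^2+\|\vec f\|^2+\|G\|^2\big)\le\frac12,$$ where $\|\vec e\|,\|\vec f\|$ are Euclidean norms and $\|G\|^2=\sum_{i,j}g_{ij}^2$.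
   Context: $\vec{s}=(s_1,s_2,s_3)$ denotes the vector of Pauli matrices, and for $\hat w\in\mathbb{R}^3$, $\hat w\cdot\vec s=\sum_k w_k s_k$. $\vec e,\vec f$ are the local Bloch vectors of $\sigma$ and $G$ its correlation matrix. *)

theory Defs
  imports "HOL-Analysis.Analysis"
begin

type_synonym qmat = "complex^2^2"
type_synonym qqmat = "complex^(2\<times>2)^(2\<times>2)"

definition cadj :: "complex^'n^'n \<Rightarrow> complex^'n^'n" where
  "cadj A = (\<chi> i j. cnj (A $ j $ i))"

definition unitary_mat :: "complex^'n^'n \<Rightarrow> bool" where
  "unitary_mat U \<longleftrightarrow> U ** cadj U = mat 1 \<and> cadj U ** U = mat 1"

definition hermitian_mat :: "complex^'n^'n \<Rightarrow> bool" where
  "hermitian_mat A \<longleftrightarrow> cadj A = A"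

definition psd_mat :: "complex^'n^'n \<Rightarrow> bool" where
  "psd_mat A \<longleftrightarrow> (\<forall>v::complex^'n.
     let q = (\<Sum>i\<in>UNIV. cnj (v $ i) * (A *v v) $ i) in Im q = 0 \<and> Re q \<ge> 0)"

definition density_mat :: "complex^'n^'n \<Rightarrow> bool" where
  "density_mat A \<longleftrightarrow> hermitian_mat A \<and> psd_mat A \<and> trace A = 1"

definition kron :: "qmat \<Rightarrow> qmat \<Rightarrow> qqmat" where
  "kron A B = (\<chi> p q. A $ fst p $ fst q * B $ snd p $ snd q)"

text \<open>Pauli matrices s_1, s_2, s_3, indexed by type 3 (index 3 = 0 in type 3).\<close>
definition pauli :: "3 \<Rightarrow> qmat" where
  "pauli k =
    (if k = 1 then (\<chi> i j. if i \<noteq> j then 1 else 0)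
     else if k = 2 then (\<chi> i j. if i = 0 \<and> j = 1 then - \<i> else if i = 1 \<and> j = 0 then \<i> else 0)
     else (\<chi> i j. if i = j then (if i = 0 then 1 else -1) else 0))"

definition bloch :: "real^3 \<Rightarrow> qmat" where
  "bloch w = (\<chi> i j. \<Sum>k\<in>UNIV. complex_of_real (w $ k) * pauli k $ i $ j)"

definition AUS3 :: "qqmat set" where
  "AUS3 = {\<sigma>. density_mat \<sigma> \<and>
     (\<forall>(U::qqmat) (u::3 \<Rightarrow> real^3) (v::3 \<Rightarrow> real^3).
        unitary_mat U \<and> (\<forall>i. norm (u i) = 1) \<and> (\<forall>i. norm (v i) = 1) \<and>
        (\<forall>i j. i \<noteq> j \<longrightarrow> v i \<bullet> v j = 0) \<longrightarrow>
        1 / sqrt 3 * cmod (\<Sum>i\<in>UNIV. trace (U ** \<sigma> ** cadj U ** kron (bloch (u i)) (bloch (v i)))) \<le> 1)}"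

definition two_qubit_repr :: "real^3 \<Rightarrow> real^3 \<Rightarrow> real^3^3 \<Rightarrow> qqmat" where
  "two_qubit_repr e f G =
     (\<chi> a b. (1/4) * (kron (mat 1) (mat 1) $ a $ b + kron (bloch e) (mat 1) $ a $ b
        + kron (mat 1) (bloch f) $ a $ b
        + (\<Sum>i\<in>UNIV. \<Sum>j\<in>UNIV. complex_of_real (G $ i $ j) * kron (pauli i) (pauli j) $ a $ b)))"

end

theory Submission
  imports Defs
begin

(* Expand two-qubit operators in the product basis s\<^sub>a \<otimes> s\<^sub>b, a, b \<in> {0,1,2,3}, with s\<^sub>0 = I.
  This basis is orthogonal with all Hilbert-Schmidt norms equal to 4, so the coefficients
  c\<^sub>a\<^sub>b = Tr(\<sigma> s\<^sub>a \<otimes> s\<^sub>b) obey Parseval: \<Sum> |c\<^sub>a\<^sub>b|\<^sup>2 = 4 Tr(\<sigma>\<sigma>\<^sup>\<dagger>).  For \<sigma> in Bloch form the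
  coefficients are 1, e, f and G, so the criterion reads Tr(\<sigma>\<sigma>\<^sup>\<dagger>) \<le> 1/2, a condition invariant
  under \<sigma> \<mapsto> U\<sigma>U\<^sup>\<dagger>.

  The quantity in AUS\<^sub>3 equals \<Sum>\<^sub>i u\<^sub>i \<bullet> C v\<^sub>i for the correlation block C of U\<sigma>U\<^sup>\<dagger>.  Cauchy-Schwarz
  twice and Bessel for the orthonormal v\<^sub>i bound it by \<surd>3 \<parallel>C\<parallel>, and \<parallel>C\<parallel>\<^sup>2 \<le> 4 Tr(\<sigma>\<sigma>\<^sup>\<dagger>) - 1.

  Conversely, a unitary taking an eigenbasis of \<sigma> to the Bell basis makes U\<sigma>U\<^sup>\<dagger> Bell-diagonal:
  its local Bloch vectors vanish and C = diag t with \<parallel>t\<parallel>\<^sup>2 = 4 Tr(\<sigma>\<sigma>\<^sup>\<dagger>) - 1.  Orthonormal v\<^sub>i on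
  which the weights t\<^sub>k\<^sup>2 have equal averages, together with u\<^sub>i \<sim> diag t v\<^sub>i, give the value
  \<surd>3 \<parallel>t\<parallel>, which exceeds \<surd>3 as soon as Tr(\<sigma>\<sigma>\<^sup>\<dagger>) > 1/2. *)

lemma sum_UNIV_prod:
  "(\<Sum>z\<in>(UNIV :: ('a::finite \<times> 'b::finite) set). f (fst z) (snd z)) = (\<Sum>a\<in>UNIV. \<Sum>b\<in>UNIV. f a b)"
  by (simp add: UNIV_Times_UNIV[symmetric] sum.cartesian_product case_prod_beta del: UNIV_Times_UNIV)

lemma sum_UNIV_2x2: "sum f (UNIV :: (2 \<times> 2) set) = f (1,1) + f (1,2) + f (2,1) + f (2,2)"
  using sum_UNIV_prod[of "\<lambda>a b. f (a, b)"] by (simp add: sum_2 add.assoc)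

lemma sum_UNIV_option:
  "sum (f :: 'a::finite option \<Rightarrow> 'b::comm_monoid_add) UNIV = f None + (\<Sum>k\<in>UNIV. f (Some k))"
  by (simp add: UNIV_option_conv sum.reindex)

lemma sum_swap_pairs:
  "(\<Sum>p\<in>P. \<Sum>q\<in>Q. \<Sum>c\<in>C. \<Sum>d\<in>D. F p q c d) = (\<Sum>c\<in>C. \<Sum>d\<in>D. \<Sum>p\<in>P. \<Sum>q\<in>Q. F p q c d)"
proof -
  have "(\<Sum>p\<in>P. \<Sum>q\<in>Q. \<Sum>c\<in>C. \<Sum>d\<in>D. F p q c d) = (\<Sum>p\<in>P. \<Sum>c\<in>C. \<Sum>q\<in>Q. \<Sum>d\<in>D. F p q c d)"
    by (intro sum.cong refl sum.swap)
  also have "\<dots> = (\<Sum>c\<in>C. \<Sum>p\<in>P. \<Sum>d\<in>D. \<Sum>q\<in>Q. F p q c d)"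
    by (subst sum.swap) (intro sum.cong refl sum.swap)
  also have "\<dots> = (\<Sum>c\<in>C. \<Sum>d\<in>D. \<Sum>p\<in>P. \<Sum>q\<in>Q. F p q c d)"
    by (intro sum.cong refl sum.swap)
  finally show ?thesis .
qed

lemma sum_kron_factor:
  fixes \<alpha> :: "'a::finite \<Rightarrow> 'a \<Rightarrow> 'c::comm_semiring_1" and \<beta> :: "'b::finite \<Rightarrow> 'b \<Rightarrow> 'c"
  shows "(\<Sum>p\<in>UNIV. \<Sum>q\<in>UNIV. \<alpha> (fst p) (fst q) * \<beta> (snd p) (snd q))
    = (\<Sum>i\<in>UNIV. \<Sum>j\<in>UNIV. \<alpha> i j) * (\<Sum>i\<in>UNIV. \<Sum>j\<in>UNIV. \<beta> i j)"
proof -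
  have "(\<Sum>p\<in>UNIV. \<Sum>q\<in>UNIV. \<alpha> (fst p) (fst q) * \<beta> (snd p) (snd q))
      = (\<Sum>p\<in>UNIV. (\<Sum>i\<in>UNIV. \<alpha> (fst p) i) * (\<Sum>j\<in>UNIV. \<beta> (snd p) j))"
    by (simp add: sum_UNIV_prod[symmetric, of "\<lambda>i j. \<alpha> _ i * \<beta> _ j"] sum_product)
  also have "\<dots> = (\<Sum>a\<in>UNIV. \<Sum>b\<in>UNIV. (\<Sum>i\<in>UNIV. \<alpha> a i) * (\<Sum>j\<in>UNIV. \<beta> b j))"
    by (rule sum_UNIV_prod)
  also have "\<dots> = (\<Sum>i\<in>UNIV. \<Sum>j\<in>UNIV. \<alpha> i j) * (\<Sum>i\<in>UNIV. \<Sum>j\<in>UNIV. \<beta> i j)"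
    by (rule sum_product[symmetric])
  finally show ?thesis .
qed

lemma sum_mult_cnj_expand:
  fixes x :: "'z \<Rightarrow> complex" and k :: "'a \<Rightarrow> 'z \<Rightarrow> complex"
  shows "(\<Sum>a\<in>A. (\<Sum>z\<in>Z. x z * k a z) * cnj (\<Sum>w\<in>Z. x w * k a w))
       = (\<Sum>z\<in>Z. \<Sum>w\<in>Z. x z * cnj (x w) * (\<Sum>a\<in>A. k a z * cnj (k a w)))"
proof -
  have "(\<Sum>a\<in>A. (\<Sum>z\<in>Z. x z * k a z) * cnj (\<Sum>w\<in>Z. x w * k a w))
     = (\<Sum>a\<in>A. \<Sum>z\<in>Z. \<Sum>w\<in>Z. x z * k a z * (cnj (x w) * cnj (k a w)))"
    by (simp add: sum_product)
  also have "\<dots> = (\<Sum>z\<in>Z. \<Sum>w\<in>Z. \<Sum>a\<in>A. x z * k a z * (cnj (x w) * cnj (k a w)))"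
    by (subst sum.swap) (simp add: sum.swap[of _ A])
  also have "\<dots> = (\<Sum>z\<in>Z. \<Sum>w\<in>Z. x z * cnj (x w) * (\<Sum>a\<in>A. k a z * cnj (k a w)))"
    by (simp add: sum_distrib_left mult_ac)
  finally show ?thesis .
qed

section \<open>Pauli expansion of two-qubit operators\<close>

definition pauli_basis :: "3 option \<Rightarrow> qmat" where
  "pauli_basis a = (case a of None \<Rightarrow> mat 1 | Some k \<Rightarrow> pauli k)"

lemma pauli_basis_simps [simp]: "pauli_basis None = mat 1" "pauli_basis (Some k) = pauli k"
  by (simp_all add: pauli_basis_def)

lemma pauli_entries:
  "pauli 1 $ 1 $ 1 = 0" "pauli 1 $ 1 $ 2 = 1" "pauli 1 $ 2 $ 1 = 1" "pauli 1 $ 2 $ 2 = 0"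
  "pauli 2 $ 1 $ 1 = 0" "pauli 2 $ 1 $ 2 = \<i>" "pauli 2 $ 2 $ 1 = -\<i>" "pauli 2 $ 2 $ 2 = 0"
  "pauli 3 $ 1 $ 1 = -1" "pauli 3 $ 1 $ 2 = 0" "pauli 3 $ 2 $ 1 = 0" "pauli 3 $ 2 $ 2 = 1"
  "(mat 1 :: qmat) $ 1 $ 1 = 1" "(mat 1 :: qmat) $ 1 $ 2 = 0"
  "(mat 1 :: qmat) $ 2 $ 1 = 0" "(mat 1 :: qmat) $ 2 $ 2 = 1"
  by (simp_all add: pauli_def mat_def)

lemma option_3_cases: "a = None \<or> a = Some (1::3) \<or> a = Some 2 \<or> a = Some 3"
  using exhaust_3 by (cases a) auto

lemma pauli_basis_complete:
  "(\<Sum>a\<in>UNIV. pauli_basis a $ i $ j * cnj (pauli_basis a $ i' $ j')) = (if i = i' \<and> j = j' then 2 else 0)"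
  using exhaust_2[of i] exhaust_2[of j] exhaust_2[of i'] exhaust_2[of j']
  by (auto simp: sum_UNIV_option sum_3 pauli_entries)

lemma trace_pauli_basis_mult:
  "(\<Sum>i\<in>UNIV. \<Sum>j\<in>UNIV. pauli_basis a $ i $ j * pauli_basis b $ j $ i) = (if a = b then 2 else 0)"
  using option_3_cases[of a] option_3_cases[of b]
  by (auto simp: sum_2 pauli_entries)

definition pauli_coeff :: "qqmat \<Rightarrow> 3 option \<Rightarrow> 3 option \<Rightarrow> complex" where
  "pauli_coeff A a b = trace (A ** kron (pauli_basis a) (pauli_basis b))"

definition frob_sq :: "complex^'n^'n \<Rightarrow> real" where
  "frob_sq A = (\<Sum>i\<in>UNIV. \<Sum>j\<in>UNIV. (cmod (A $ i $ j))\<^sup>2)"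

lemma pauli_coeff_expand:
  "pauli_coeff A a b =
     (\<Sum>p\<in>UNIV. \<Sum>q\<in>UNIV. A $ p $ q * (pauli_basis a $ fst q $ fst p * pauli_basis b $ snd q $ snd p))"
  by (simp add: pauli_coeff_def trace_def matrix_matrix_mult_def kron_def)

lemma pauli_coeff_None_None: "pauli_coeff A None None = trace A"
proof -
  have "kron (mat 1) (mat 1) = mat 1"
    by (simp add: vec_eq_iff kron_def mat_def prod_eq_iff)
  then show ?thesis by (simp add: pauli_coeff_def)
qed

lemma pauli_coeff_parseval:
  "(\<Sum>a\<in>UNIV. \<Sum>b\<in>UNIV. (cmod (pauli_coeff A a b))\<^sup>2) = 4 * frob_sq A"
proof -
  define x :: "(2\<times>2) \<times> (2\<times>2) \<Rightarrow> complex" where "x z = A $ fst z $ snd z" for z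
  define k :: "3 option \<times> 3 option \<Rightarrow> (2\<times>2) \<times> (2\<times>2) \<Rightarrow> complex" where
    "k ab z = pauli_basis (fst ab) $ fst (snd z) $ fst (fst z) * pauli_basis (snd ab) $ snd (snd z) $ snd (fst z)"
    for ab z
  have coeff: "pauli_coeff A (fst ab) (snd ab) = (\<Sum>z\<in>UNIV. x z * k ab z)" for ab
    unfolding pauli_coeff_expand sum_UNIV_prod[symmetric] x_def k_def ..
  have kernel: "(\<Sum>ab\<in>UNIV. k ab z * cnj (k ab w)) = (if z = w then 4 else 0)" for z w
  proof -
    have "(\<Sum>ab\<in>UNIV. k ab z * cnj (k ab w)) =
      (\<Sum>a\<in>UNIV. pauli_basis a $ fst (snd z) $ fst (fst z) * cnj (pauli_basis a $ fst (snd w) $ fst (fst w)))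
      * (\<Sum>b\<in>UNIV. pauli_basis b $ snd (snd z) $ snd (fst z) * cnj (pauli_basis b $ snd (snd w) $ snd (fst w)))"
      unfolding sum_UNIV_prod[symmetric] k_def sum_product by (simp add: mult_ac)
    then show ?thesis
      unfolding pauli_basis_complete by (auto simp: prod_eq_iff)
  qed
  have "complex_of_real (\<Sum>a\<in>UNIV. \<Sum>b\<in>UNIV. (cmod (pauli_coeff A a b))\<^sup>2)
      = (\<Sum>ab\<in>UNIV. pauli_coeff A (fst ab) (snd ab) * cnj (pauli_coeff A (fst ab) (snd ab)))"
    unfolding sum_UNIV_prod[symmetric] by (simp add: complex_norm_square[symmetric])
  also have "\<dots> = (\<Sum>z\<in>UNIV. \<Sum>w\<in>UNIV. x z * cnj (x w) * (if z = w then 4 else 0))"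
    unfolding coeff sum_mult_cnj_expand kernel ..
  also have "\<dots> = (\<Sum>z\<in>UNIV. 4 * (x z * cnj (x z)))"
    by (simp add: if_distrib mult_ac cong: if_cong)
  also have "\<dots> = complex_of_real (4 * frob_sq A)"
    unfolding frob_sq_def sum_UNIV_prod[symmetric] x_def
    by (simp add: complex_norm_square[symmetric] sum_distrib_left)
  finally show ?thesis by (simp only: of_real_eq_iff)
qed

lemma pauli_coeff_of_expansion:
  assumes A: "\<And>p q. A $ p $ q = (1/4) * (\<Sum>c\<in>UNIV. \<Sum>d\<in>UNIV.
     \<gamma> c d * (pauli_basis c $ fst p $ fst q * pauli_basis d $ snd p $ snd q))"
  shows "pauli_coeff A a b = \<gamma> a b"
proof -
  have "pauli_coeff A a b = (\<Sum>p\<in>UNIV. \<Sum>q\<in>UNIV. (1/4) * (\<Sum>c\<in>UNIV. \<Sum>d\<in>UNIV. \<gamma> c d *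
       ((pauli_basis c $ fst p $ fst q * pauli_basis a $ fst q $ fst p)
          * (pauli_basis d $ snd p $ snd q * pauli_basis b $ snd q $ snd p))))"
    unfolding pauli_coeff_expand A by (simp add: sum_distrib_left sum_distrib_right mult_ac)
  also have "\<dots> = (1/4) * (\<Sum>c\<in>UNIV. \<Sum>d\<in>UNIV. \<gamma> c d *
       (\<Sum>p\<in>UNIV. \<Sum>q\<in>UNIV. (pauli_basis c $ fst p $ fst q * pauli_basis a $ fst q $ fst p)
          * (pauli_basis d $ snd p $ snd q * pauli_basis b $ snd q $ snd p)))"
    unfolding sum_distrib_left by (rule sum_swap_pairs)
  also have "\<dots> = (1/4) * (\<Sum>c\<in>UNIV. \<Sum>d\<in>UNIV. \<gamma> c d * ((if c = a then 2 else 0) * (if d = b then 2 else 0)))"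
    using sum_kron_factor[of "\<lambda>x y. pauli_basis _ $ x $ y * pauli_basis a $ y $ x"
        "\<lambda>x y. pauli_basis _ $ x $ y * pauli_basis b $ y $ x"]
    by (simp add: trace_pauli_basis_mult)
  also have "\<dots> = \<gamma> a b"
  proof -
    have "\<gamma> c d * ((if c = a then 2 else 0) * (if d = b then 2 else 0))
        = (if d = b then if c = a then 4 * \<gamma> a b else 0 else 0)" for c d
      by simp
    then show ?thesis by simp
  qed
  finally show ?thesis .
qed

definition bloch_coeff :: "real^3 \<Rightarrow> real^3 \<Rightarrow> real^3^3 \<Rightarrow> 3 option \<Rightarrow> 3 option \<Rightarrow> real" where
  "bloch_coeff e f G a b = (case (a, b) of
     (None, None) \<Rightarrow> 1 | (None, Some k) \<Rightarrow> f $ k | (Some j, None) \<Rightarrow> e $ j | (Some j, Some k) \<Rightarrow> G $ j $ k)"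

lemma two_qubit_repr_pauli_expansion:
  "two_qubit_repr e f G $ p $ q = (1/4) * (\<Sum>a\<in>UNIV. \<Sum>b\<in>UNIV.
     of_real (bloch_coeff e f G a b) * (pauli_basis a $ fst p $ fst q * pauli_basis b $ snd p $ snd q))"
  by (simp add: two_qubit_repr_def kron_def bloch_def sum_UNIV_option bloch_coeff_def
      sum_distrib_left sum_distrib_right algebra_simps sum.distrib)

lemma pauli_coeff_two_qubit_repr:
  "pauli_coeff (two_qubit_repr e f G) a b = of_real (bloch_coeff e f G a b)"
  by (rule pauli_coeff_of_expansion) (rule two_qubit_repr_pauli_expansion)

lemma frob_sq_two_qubit_repr:
  "4 * frob_sq (two_qubit_repr e f G) =
     1 + (norm e)\<^sup>2 + (norm f)\<^sup>2 + (\<Sum>i\<in>UNIV. \<Sum>j\<in>UNIV. (G $ i $ j)\<^sup>2)"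
proof -
  have norm_sq: "(norm x)\<^sup>2 = (\<Sum>k\<in>UNIV. (x $ k)\<^sup>2)" for x :: "real^3"
    by (simp add: norm_vec_def L2_set_def sum_nonneg)
  show ?thesis
    unfolding pauli_coeff_parseval[symmetric] pauli_coeff_two_qubit_repr norm_sq
    by (simp add: sum_UNIV_option bloch_coeff_def sum.distrib)
qed

lemma cadj_mult: "cadj (A ** B) = cadj B ** cadj A"
  by (simp add: vec_eq_iff cadj_def matrix_matrix_mult_def mult.commute)

lemma cadj_cadj [simp]: "cadj (cadj A) = A"
  by (simp add: vec_eq_iff cadj_def)

lemma trace_mult_cadj: "trace (A ** cadj A) = of_real (frob_sq A)"
  by (simp add: trace_def matrix_matrix_mult_def cadj_def frob_sq_def complex_norm_square[symmetric])

lemma trace_unitary_conj: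
  assumes "unitary_mat U"
  shows "trace (U ** A ** cadj U) = trace A"
  using assms trace_mul_sym[of "U ** A" "cadj U"] by (simp add: unitary_mat_def matrix_mul_assoc)

lemma frob_sq_unitary_conj:
  assumes U: "unitary_mat U"
  shows "frob_sq (U ** A ** cadj U) = frob_sq A"
proof -
  have "(U ** A ** cadj U) ** cadj (U ** A ** cadj U) = U ** A ** (cadj U ** U) ** cadj A ** cadj U"
    by (simp add: cadj_mult matrix_mul_assoc)
  also have "\<dots> = U ** (A ** cadj A) ** cadj U"
    using U by (simp add: unitary_mat_def matrix_mul_assoc)
  finally have "of_real (frob_sq (U ** A ** cadj U)) = (of_real (frob_sq A) :: complex)"
    using trace_unitary_conj[OF U, of "A ** cadj A"] by (simp add: trace_mult_cadj[symmetric])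
  then show ?thesis by simp
qed

lemma trace_kron_bloch:
  "trace (R ** kron (bloch u) (bloch v)) =
     (\<Sum>j\<in>UNIV. \<Sum>k\<in>UNIV. of_real (u $ j * v $ k) * pauli_coeff R (Some j) (Some k))"
proof -
  have "trace (R ** kron (bloch u) (bloch v)) =
    (\<Sum>p\<in>UNIV. \<Sum>q\<in>UNIV. R $ p $ q * ((\<Sum>j\<in>UNIV. of_real (u $ j) * pauli j $ fst q $ fst p)
       * (\<Sum>k\<in>UNIV. of_real (v $ k) * pauli k $ snd q $ snd p)))"
    by (simp add: trace_def matrix_matrix_mult_def kron_def bloch_def)
  also have "\<dots> = (\<Sum>p\<in>UNIV. \<Sum>q\<in>UNIV. \<Sum>j\<in>UNIV. \<Sum>k\<in>UNIV. of_real (u $ j * v $ k) *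
        (R $ p $ q * (pauli_basis (Some j) $ fst q $ fst p * pauli_basis (Some k) $ snd q $ snd p)))"
    by (intro sum.cong refl)
      (simp add: sum_product sum_distrib_left mult_ac, subst sum.swap, simp add: mult_ac)
  also have "\<dots> = (\<Sum>j\<in>UNIV. \<Sum>k\<in>UNIV. \<Sum>p\<in>UNIV. \<Sum>q\<in>UNIV. of_real (u $ j * v $ k) *
        (R $ p $ q * (pauli_basis (Some j) $ fst q $ fst p * pauli_basis (Some k) $ snd q $ snd p)))"
    by (rule sum_swap_pairs)
  also have "\<dots> = (\<Sum>j\<in>UNIV. \<Sum>k\<in>UNIV. of_real (u $ j * v $ k) * pauli_coeff R (Some j) (Some k))"
    unfolding pauli_coeff_expand sum_distrib_left ..
  finally show ?thesis .
qed

section \<open>Orthonormal frames\<close>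

definition orthonormal_frame :: "('i \<Rightarrow> 'a::real_inner) \<Rightarrow> bool" where
  "orthonormal_frame v \<longleftrightarrow> (\<forall>i. norm (v i) = 1) \<and> (\<forall>i j. i \<noteq> j \<longrightarrow> v i \<bullet> v j = 0)"

lemma orthonormal_frame_inner:
  "orthonormal_frame v \<Longrightarrow> v i \<bullet> v j = (if i = j then 1 else 0)"
  by (auto simp: orthonormal_frame_def norm_eq_1)

lemma orthonormal_frame_columns:
  fixes v :: "'n::finite \<Rightarrow> real^'n"
  assumes "orthonormal_frame v"
  shows "(\<Sum>i\<in>UNIV. v i $ k * v i $ l) = (if k = l then 1 else 0)"
proof -
  define V :: "real^'n^'n" where "V = (\<chi> i k. v i $ k)"
  have "V ** transpose V = mat 1"
    using orthonormal_frame_inner[OF assms]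
    by (simp add: vec_eq_iff V_def matrix_matrix_mult_def transpose_def mat_def inner_vec_def)
  then have "transpose V ** V = mat 1"
    by (simp add: matrix_left_right_inverse)
  then have "(transpose V ** V) $ k $ l = mat 1 $ k $ l" by simp
  then show ?thesis by (simp add: V_def matrix_matrix_mult_def transpose_def mat_def)
qed

lemma orthonormal_frame_parseval:
  fixes v :: "'n::finite \<Rightarrow> real^'n" and z :: "'n \<Rightarrow> complex"
  assumes "orthonormal_frame v"
  shows "(\<Sum>i\<in>UNIV. (cmod (\<Sum>k\<in>UNIV. z k * of_real (v i $ k)))\<^sup>2) = (\<Sum>k\<in>UNIV. (cmod (z k))\<^sup>2)"
proof -
  have "complex_of_real (\<Sum>i\<in>UNIV. (cmod (\<Sum>k\<in>UNIV. z k * of_real (v i $ k)))\<^sup>2)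
     = (\<Sum>k\<in>UNIV. \<Sum>l\<in>UNIV. z k * cnj (z l) * (\<Sum>i\<in>UNIV. of_real (v i $ k) * cnj (of_real (v i $ l))))"
    by (simp only: of_real_sum complex_norm_square sum_mult_cnj_expand)
  also have "\<dots> = (\<Sum>k\<in>UNIV. \<Sum>l\<in>UNIV. z k * cnj (z l) * (if k = l then 1 else 0))"
  proof -
    have "(\<Sum>i\<in>UNIV. of_real (v i $ k) * cnj (of_real (v i $ l))) = (if k = l then 1 else (0::complex))"
      for k l
      using orthonormal_frame_columns[OF assms, of k l] by (simp flip: of_real_mult of_real_sum)
    then show ?thesis by simp
  qed
  also have "\<dots> = complex_of_real (\<Sum>k\<in>UNIV. (cmod (z k))\<^sup>2)"
    by (simp add: complex_norm_square[symmetric] if_distrib cong: if_cong)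
  finally show ?thesis by (simp only: of_real_eq_iff)
qed

lemma frame_bilinear_bound:
  fixes u v :: "'n::finite \<Rightarrow> real^'n" and C :: "'n \<Rightarrow> 'n \<Rightarrow> complex"
  assumes u: "\<forall>i. norm (u i) = 1" and v: "orthonormal_frame v"
  shows "cmod (\<Sum>i\<in>UNIV. \<Sum>j\<in>UNIV. \<Sum>k\<in>UNIV. of_real (u i $ j * v i $ k) * C j k)
    \<le> sqrt CARD('n) * sqrt (\<Sum>j\<in>UNIV. \<Sum>k\<in>UNIV. (cmod (C j k))\<^sup>2)"
proof -
  define w where "w i j = (\<Sum>k\<in>UNIV. C j k * of_real (v i $ k))" for i j
  define nw where "nw i = L2_set (\<lambda>j. cmod (w i j)) UNIV" for i
  have row_bound: "cmod (\<Sum>j\<in>UNIV. of_real (u i $ j) * w i j) \<le> \<bar>1\<bar> * \<bar>nw i\<bar>" for i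
  proof -
    have "cmod (\<Sum>j\<in>UNIV. of_real (u i $ j) * w i j) \<le> (\<Sum>j\<in>UNIV. \<bar>u i $ j\<bar> * \<bar>cmod (w i j)\<bar>)"
      by (rule order_trans[OF norm_sum]) (simp add: norm_mult)
    also have "\<dots> \<le> L2_set (\<lambda>j. u i $ j) UNIV * nw i"
      unfolding nw_def by (rule L2_set_mult_ineq)
    also have "L2_set (\<lambda>j. u i $ j) UNIV = 1"
      using u by (simp add: norm_vec_def L2_set_def)
    finally show ?thesis
      by (simp add: nw_def)
  qed
  have "cmod (\<Sum>i\<in>UNIV. \<Sum>j\<in>UNIV. \<Sum>k\<in>UNIV. of_real (u i $ j * v i $ k) * C j k)
      = cmod (\<Sum>i\<in>UNIV. \<Sum>j\<in>UNIV. of_real (u i $ j) * w i j)"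
    by (simp add: w_def sum_distrib_left mult_ac)
  also have "\<dots> \<le> (\<Sum>i\<in>UNIV. \<bar>1\<bar> * \<bar>nw i\<bar>)"
    by (intro order_trans[OF norm_sum sum_mono] row_bound)
  also have "\<dots> \<le> L2_set (\<lambda>i::'n. 1) UNIV * L2_set nw UNIV"
    using L2_set_mult_ineq[of "\<lambda>i. 1" nw UNIV] by simp
  also have "L2_set nw UNIV = sqrt (\<Sum>j\<in>UNIV. \<Sum>k\<in>UNIV. (cmod (C j k))\<^sup>2)"
  proof -
    have "(\<Sum>i\<in>UNIV. (nw i)\<^sup>2) = (\<Sum>i\<in>UNIV. \<Sum>j\<in>UNIV. (cmod (w i j))\<^sup>2)"
      by (simp add: nw_def L2_set_def sum_nonneg)
    also have "\<dots> = (\<Sum>j\<in>UNIV. \<Sum>i\<in>UNIV. (cmod (w i j))\<^sup>2)"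
      by (rule sum.swap)
    also have "\<dots> = (\<Sum>j\<in>UNIV. \<Sum>k\<in>UNIV. (cmod (C j k))\<^sup>2)"
      unfolding w_def orthonormal_frame_parseval[OF v] ..
    finally show ?thesis by (simp add: L2_set_def)
  qed
  finally show ?thesis
    by (simp add: L2_set_def)
qed

lemma UNIV_3_sorted:
  fixes a :: "3 \<Rightarrow> real"
  obtains p q r where "UNIV = {p, q, r}" "p \<noteq> q" "p \<noteq> r" "q \<noteq> r" "a q \<le> a r" "a r \<le> a p"
proof -
  have U: "UNIV = {p, q, r}" if "{p, q, r} = {1, 2, 3 :: 3}" for p q r
    using that by (simp add: UNIV_3)
  (* Each of the eight comparison patterns is contradictory or matches one of the six orders. *)
  show thesis
    by (cases "a 1 \<le> a 2"; cases "a 2 \<le> a 3"; cases "a 1 \<le> a 3";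
      ((rule that[of 3 1 2] that[of 2 1 3] that[of 2 3 1] that[of 3 2 1] that[of 1 2 3] that[of 1 3 2];
        (rule U)?; auto; fail) | linarith))
qed

lemma orthonormal_frame_equalizing:
  fixes a :: "3 \<Rightarrow> real"
  obtains v :: "3 \<Rightarrow> real^3"
  where "orthonormal_frame v" "\<And>i. (\<Sum>k\<in>UNIV. a k * (v i $ k)\<^sup>2) = sum a UNIV / 3"
proof -
  define m where "m = sum a UNIV / 3"
  obtain p q r where U: "UNIV = {p, q, r}" and pqr: "p \<noteq> q" "p \<noteq> r" "q \<noteq> r"
    and ord: "a q \<le> a r" "a r \<le> a p"
    by (rule UNIV_3_sorted)
  have sum_pqr: "sum f UNIV = f p + f q + f r" for f :: "3 \<Rightarrow> real"
    using pqr by (simp add: U)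
  have m: "3 * m = a p + a q + a r"
    by (simp add: m_def sum_pqr)
  obtain x where x: "0 \<le> x" "x \<le> 1" "x * a p + (1 - x) * a q = m"
  proof (cases "a p = a q")
    case True
    then show ?thesis
      using that[of 0] m ord by simp
  next
    case False
    then have gap: "a p - a q > 0"
      using ord by simp
    show ?thesis
    proof (rule that[of "(m - a q) / (a p - a q)"])
      show "0 \<le> (m - a q) / (a p - a q)" "(m - a q) / (a p - a q) \<le> 1"
        using gap m ord by (simp_all add: field_simps)
      have affine: "y * a p + (1 - y) * a q = a q + y * (a p - a q)" for y
        by (simp add: algebra_simps)
      show "(m - a q) / (a p - a q) * a p + (1 - (m - a q) / (a p - a q)) * a q = m"
        unfolding affine using gap by simp
    qed
  qed
  (* The first vector mixes e\<^sub>p, e\<^sub>q in the proportion x : 1 - x, averaging to m; the other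
    two take the complementary mix plus \<plusminus>e\<^sub>r and average to (3m - m)/2 = m. *)
  define c where "c = sqrt x"
  define s where "s = sqrt (1 - x)"
  have c2: "c\<^sup>2 = x" and s2: "s\<^sup>2 = 1 - x"
    using x by (simp_all add: c_def s_def)
  define w :: "real \<Rightarrow> real \<Rightarrow> real \<Rightarrow> real^3" where
    "w \<alpha> \<beta> \<gamma> = (\<chi> k. if k = p then \<alpha> else if k = q then \<beta> else \<gamma>)" for \<alpha> \<beta> \<gamma>
  have w_inner: "w \<alpha> \<beta> \<gamma> \<bullet> w \<alpha>' \<beta>' \<gamma>' = \<alpha> * \<alpha>' + \<beta> * \<beta>' + \<gamma> * \<gamma>'" for \<alpha> \<beta> \<gamma> \<alpha>' \<beta>' \<gamma>'
    using pqr by (simp add: inner_vec_def sum_pqr w_def)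
  have w_weight: "(\<Sum>k\<in>UNIV. a k * (w \<alpha> \<beta> \<gamma> $ k)\<^sup>2) = a p * \<alpha>\<^sup>2 + a q * \<beta>\<^sup>2 + a r * \<gamma>\<^sup>2"
    for \<alpha> \<beta> \<gamma>
    using pqr by (simp add: sum_pqr w_def)
  define v :: "3 \<Rightarrow> real^3" where
    "v i = (if i = 1 then w c s 0 else w (- s / sqrt 2) (c / sqrt 2) ((if i = 2 then 1 else -1) / sqrt 2))"
    for i
  have "v i \<bullet> v j = (if i = j then 1 else 0)" for i j
    using exhaust_3[of i] exhaust_3[of j] c2 s2
    by (auto simp: v_def w_inner power2_eq_square field_simps)
  then have "orthonormal_frame v"
    by (simp add: orthonormal_frame_def norm_eq_1)
  moreover have "(\<Sum>k\<in>UNIV. a k * (v i $ k)\<^sup>2) = m" for i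
    using exhaust_3[of i] x(3) m
    by (auto simp: v_def w_weight c2 s2 field_simps)
  ultimately show ?thesis
    using that by (simp add: m_def)
qed

lemma frame_diagonal_value:
  fixes t :: "3 \<Rightarrow> real"
  assumes pos: "(\<Sum>k\<in>UNIV. (t k)\<^sup>2) > 0"
  obtains u v :: "3 \<Rightarrow> real^3"
  where "\<forall>i. norm (u i) = 1" "orthonormal_frame v"
    "(\<Sum>i\<in>UNIV. \<Sum>j\<in>UNIV. u i $ j * v i $ j * t j) = sqrt (3 * (\<Sum>k\<in>UNIV. (t k)\<^sup>2))"
proof -
  define m where "m = (\<Sum>k\<in>UNIV. (t k)\<^sup>2) / 3"
  have m: "m > 0"
    using pos by (simp add: m_def)
  obtain v :: "3 \<Rightarrow> real^3" where v: "orthonormal_frame v"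
    and weight: "\<And>i. (\<Sum>k\<in>UNIV. (t k)\<^sup>2 * (v i $ k)\<^sup>2) = m"
    using orthonormal_frame_equalizing[of "\<lambda>k. (t k)\<^sup>2"] unfolding m_def by blast
  define u :: "3 \<Rightarrow> real^3" where "u i = (\<chi> j. t j * v i $ j / sqrt m)" for i
  have "u i \<bullet> u i = 1" for i
  proof -
    have "u i \<bullet> u i = (\<Sum>k\<in>UNIV. (t k)\<^sup>2 * (v i $ k)\<^sup>2) / m"
      using m by (simp add: u_def inner_vec_def power2_eq_square sum_divide_distrib mult_ac)
    then show ?thesis
      using weight m by simp
  qed
  then have u: "\<forall>i. norm (u i) = 1"
    by (simp add: norm_eq_1)
  have "(\<Sum>j\<in>UNIV. u i $ j * v i $ j * t j) = sqrt m" for i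
  proof -
    have "(\<Sum>j\<in>UNIV. u i $ j * v i $ j * t j) = (\<Sum>k\<in>UNIV. (t k)\<^sup>2 * (v i $ k)\<^sup>2) / sqrt m"
      by (simp add: u_def power2_eq_square sum_divide_distrib mult_ac)
    then show ?thesis
      using weight m by (simp add: real_div_sqrt)
  qed
  then have "(\<Sum>i\<in>UNIV. \<Sum>j\<in>UNIV. u i $ j * v i $ j * t j) = 3 * sqrt m"
    by simp
  also have "\<dots> = sqrt (3\<^sup>2 * m)"
    by (simp add: real_sqrt_mult)
  also have "\<dots> = sqrt (3 * (\<Sum>k\<in>UNIV. (t k)\<^sup>2))"
    by (simp add: m_def power2_eq_square)
  finally show ?thesis
    using that u v by blast
qed

lemma correlation_block_le:
  assumes tr: "trace R = 1" and frob: "4 * frob_sq R \<le> 2"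
  shows "(\<Sum>j\<in>UNIV. \<Sum>k\<in>UNIV. (cmod (pauli_coeff R (Some j) (Some k)))\<^sup>2) \<le> 1"
proof -
  have "1 + (\<Sum>j\<in>UNIV. (cmod (pauli_coeff R (Some j) None))\<^sup>2)
      + (\<Sum>k\<in>UNIV. (cmod (pauli_coeff R None (Some k)))\<^sup>2)
      + (\<Sum>j\<in>UNIV. \<Sum>k\<in>UNIV. (cmod (pauli_coeff R (Some j) (Some k)))\<^sup>2) \<le> 2"
    using pauli_coeff_parseval[of R] frob tr
    by (simp add: sum_UNIV_option pauli_coeff_None_None sum.distrib)
  moreover have "0 \<le> (\<Sum>j\<in>UNIV. (cmod (pauli_coeff R (Some j) None))\<^sup>2)"
    "0 \<le> (\<Sum>k\<in>UNIV. (cmod (pauli_coeff R None (Some k)))\<^sup>2)"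
    by (simp_all add: sum_nonneg)
  ultimately show ?thesis
    by linarith
qed

lemma correlation_sum_le_sqrt3:
  fixes u v :: "3 \<Rightarrow> real^3"
  assumes "trace R = 1" and "4 * frob_sq R \<le> 2"
    and "\<forall>i. norm (u i) = 1" and "orthonormal_frame v"
  shows "cmod (\<Sum>i\<in>UNIV. trace (R ** kron (bloch (u i)) (bloch (v i)))) \<le> sqrt 3"
proof -
  have "cmod (\<Sum>i\<in>UNIV. trace (R ** kron (bloch (u i)) (bloch (v i))))
      \<le> sqrt CARD(3) * sqrt (\<Sum>j\<in>UNIV. \<Sum>k\<in>UNIV. (cmod (pauli_coeff R (Some j) (Some k)))\<^sup>2)"
    unfolding trace_kron_bloch by (rule frame_bilinear_bound[OF assms(3,4)])
  also have "\<dots> \<le> sqrt 3"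
    using correlation_block_le[OF assms(1,2)] by simp
  finally show ?thesis .
qed

section \<open>Spectral theorem for Hermitian matrices\<close>

definition cinner :: "complex^'n \<Rightarrow> complex^'n \<Rightarrow> complex" where
  "cinner x y = (\<Sum>i\<in>UNIV. cnj (x $ i) * y $ i)"

lemma Re_cinner: "Re (cinner x y) = x \<bullet> y"
  by (simp add: cinner_def inner_vec_def inner_complex_def)

lemma cinner_commute: "cinner y x = cnj (cinner x y)"
  by (simp add: cinner_def mult.commute)

lemma cinner_cadj: "cinner x (A *v y) = cinner (cadj A *v x) y"
proof -
  have "cinner x (A *v y) = (\<Sum>i\<in>UNIV. \<Sum>j\<in>UNIV. cnj (x $ i) * (A $ i $ j * y $ j))"
    by (simp add: cinner_def matrix_vector_mult_def sum_distrib_left)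
  also have "\<dots> = (\<Sum>j\<in>UNIV. \<Sum>i\<in>UNIV. cnj (x $ i) * (A $ i $ j * y $ j))"
    by (rule sum.swap)
  also have "\<dots> = cinner (cadj A *v x) y"
    by (simp add: cinner_def matrix_vector_mult_def cadj_def sum_distrib_right sum_distrib_left mult_ac)
  finally show ?thesis .
qed

lemma cinner_add_right: "cinner x (y + z) = cinner x y + cinner x z"
  by (simp add: cinner_def distrib_left sum.distrib)

lemma cinner_smult_left: "cinner (c *s x) y = cnj c * cinner x y"
  by (simp add: cinner_def sum_distrib_left mult_ac)

lemma cinner_smult_right: "cinner x (c *s y) = c * cinner x y"
  by (simp add: cinner_def sum_distrib_left mult_ac)

lemma cinner_scaleR_right: "cinner x (c *\<^sub>R y) = of_real c * cinner x y"
  unfolding cinner_def vector_scaleR_component by (simp add: scaleR_conv_of_real sum_distrib_left mult_ac)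

lemma cinner_self: "cinner x x = of_real (x \<bullet> x)"
  by (simp add: complex_eq_iff Re_cinner) (simp add: cinner_def)

lemma cinner_eq_0_iff: "cinner f x = 0 \<longleftrightarrow> f \<bullet> x = 0 \<and> (\<i> *s f) \<bullet> x = 0"
  by (simp add: complex_eq_iff Re_cinner[symmetric] cinner_smult_left)

lemma matrix_vector_mult_complex_scaleR: "(A :: complex^'n^'m) *v (c *\<^sub>R x) = c *\<^sub>R (A *v x)"
  by (simp add: vec_eq_iff matrix_vector_mult_def scaleR_sum_right)

lemma hermitian_inner_commute:
  assumes "cadj A = A"
  shows "x \<bullet> (A *v y) = (A *v x) \<bullet> y"
  using cinner_cadj[of x A y] assms by (simp flip: Re_cinner)

lemma nonpos_if_linear_le_quadratic:
  fixes s K :: real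
  assumes "\<And>t. t > 0 \<Longrightarrow> 2 * t * s \<le> t\<^sup>2 * K"
  shows "s \<le> 0"
proof (rule ccontr)
  assume "\<not> s \<le> 0"
  then have s: "s > 0"
    by simp
  define t where "t = s / (\<bar>K\<bar> + 1)"
  have t: "t > 0"
    using s by (simp add: t_def)
  have "2 * s \<le> t * K"
    using assms[OF t] t by (simp add: power2_eq_square)
  also have "\<dots> \<le> t * \<bar>K\<bar>"
    using t by (simp add: mult_left_mono)
  also have "\<dots> = s * (\<bar>K\<bar> / (\<bar>K\<bar> + 1))"
    by (simp add: t_def)
  also have "\<dots> < s * 1"
    using s by (intro mult_strict_left_mono) auto
  finally show False
    using s by simp
qed

lemma rayleigh_maximizer_eigenvector:
  fixes A :: "complex^'n^'n"
  assumes herm: "cadj A = A" and S: "subspace S" and inv: "\<And>x. x \<in> S \<Longrightarrow> A *v x \<in> S"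
    and vS: "v \<in> S" and nv: "norm v = 1"
    and max: "\<And>y. y \<in> S \<Longrightarrow> norm y = 1 \<Longrightarrow> y \<bullet> (A *v y) \<le> v \<bullet> (A *v v)"
  shows "A *v v = (v \<bullet> (A *v v)) *\<^sub>R v"
proof -
  define q where "q x = x \<bullet> (A *v x)" for x
  define r where "r = A *v v - q v *\<^sub>R v"
  define s where "s = r \<bullet> r"
  have sym: "x \<bullet> (A *v y) = y \<bullet> (A *v x)" for x y
    using hermitian_inner_commute[OF herm] by (simp add: inner_commute)
  have rS: "r \<in> S"
    unfolding r_def using S vS inv by (simp add: subspace_diff subspace_scale)
  have vv: "v \<bullet> v = 1"
    using nv by (simp add: norm_eq_1)
  have rv: "r \<bullet> v = 0"
    by (simp add: r_def inner_diff_left vv q_def inner_commute[of "A *v v" v])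
  have "A *v v = r + q v *\<^sub>R v"
    by (simp add: r_def)
  then have rAv: "r \<bullet> (A *v v) = s"
    by (simp add: inner_add_right rv s_def)
  (* Moving from v towards the residual r stays inside S and raises the Rayleigh quotient to
    first order in t unless r = 0. *)
  have perturb: "2 * t * s \<le> t\<^sup>2 * (s * q v - q r)" if t: "t > 0" for t
  proof -
    define x where "x = v + t *\<^sub>R r"
    have xS: "x \<in> S"
      unfolding x_def using S vS rS by (simp add: subspace_add subspace_scale)
    have xx: "x \<bullet> x = 1 + t\<^sup>2 * s"
      by (simp add: x_def inner_add_left inner_add_right vv rv inner_commute[of v r] s_def
          power2_eq_square)
    have qx: "q x = q v + 2 * t * s + t\<^sup>2 * q r"
      using sym[of v r] rAv
      by (simp add: q_def x_def matrix_vector_mult_complex_scaleR inner_add_left inner_add_right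
          power2_eq_square algebra_simps)
    have "x \<bullet> x > 0"
      using xx by (simp add: s_def add_pos_nonneg)
    then have nx: "norm x > 0"
      by simp
    have "q (x /\<^sub>R norm x) = q x / (norm x)\<^sup>2"
      by (simp add: q_def matrix_vector_mult_complex_scaleR power2_eq_square divide_inverse)
    moreover have "q (x /\<^sub>R norm x) \<le> q v"
      using max[of "x /\<^sub>R norm x"] xS S nx by (simp add: q_def subspace_scale)
    ultimately have "q x \<le> q v * (norm x)\<^sup>2"
      using nx by (simp add: divide_le_eq)
    then show ?thesis
      using qx xx by (simp add: power2_norm_eq_inner algebra_simps)
  qed
  have "s = 0"
    using nonpos_if_linear_le_quadratic[OF perturb] inner_ge_zero[of r] by (simp add: s_def)
  then show ?thesis
    by (simp add: s_def r_def q_def)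
qed

lemma hermitian_eigenvector_in_subspace:
  fixes A :: "complex^'n^'n"
  assumes herm: "cadj A = A" and S: "subspace S" and inv: "\<And>x. x \<in> S \<Longrightarrow> A *v x \<in> S"
    and x: "x \<in> S" "x \<noteq> 0"
  obtains v l where "v \<in> S" "cinner v v = 1" "A *v v = of_real l *s v"
proof -
  define T where "T = S \<inter> sphere 0 1"
  have "compact T"
    unfolding T_def by (rule closed_Int_compact[OF closed_subspace[OF S] compact_sphere])
  moreover have "x /\<^sub>R norm x \<in> T"
    using S x by (simp add: T_def subspace_scale)
  moreover have "continuous_on T (\<lambda>y. y \<bullet> (A *v y))"
    by (intro continuous_intros)
  ultimately obtain v where vT: "v \<in> T" and max: "\<And>y. y \<in> T \<Longrightarrow> y \<bullet> (A *v y) \<le> v \<bullet> (A *v v)"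
    using continuous_attains_sup[of T] by blast
  have vS: "v \<in> S" and nv: "norm v = 1"
    using vT by (auto simp: T_def)
  have "A *v v = (v \<bullet> (A *v v)) *\<^sub>R v"
    using rayleigh_maximizer_eigenvector[OF herm S inv vS nv] max by (simp add: T_def)
  then have "A *v v = of_real (v \<bullet> (A *v v)) *s v"
    unfolding vec_eq_iff vector_scaleR_component by (simp add: scaleR_conv_of_real)
  moreover have "cinner v v = 1"
    using nv by (simp add: cinner_self norm_eq_1)
  ultimately show ?thesis
    using that vS by blast
qed

lemma orthogonal_complement_nonzero:
  fixes F :: "(complex^'n) set"
  assumes "finite F" and "card F < CARD('n)"
  obtains x where "x \<noteq> 0" "\<And>f. f \<in> F \<Longrightarrow> cinner f x = 0"
proof -
  (* cinner f x = 0 means real orthogonality to both f and \<i>f, so count real dimensions. *)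
  define Fs where "Fs = F \<union> (\<lambda>f. \<i> *s f) ` F"
  have "dim Fs \<le> card Fs"
    using assms(1) by (simp add: Fs_def dim_le_card')
  also have "card Fs \<le> card F + card F"
    unfolding Fs_def by (rule order_trans[OF card_Un_le]) (simp add: card_image_le assms(1))
  also have "\<dots> < DIM(complex^'n)"
    using assms(2) by simp
  finally obtain x :: "complex^'n" where x: "x \<noteq> 0" "\<And>y. y \<in> span Fs \<Longrightarrow> orthogonal x y"
    using orthogonal_to_subspace_exists by blast
  have "cinner f x = 0" if "f \<in> F" for f
  proof -
    have "f \<in> span Fs" "\<i> *s f \<in> span Fs"
      using that by (auto simp: Fs_def intro: span_base)
    then show ?thesis
      using x(2)[of f] x(2)[of "\<i> *s f"] by (simp add: cinner_eq_0_iff orthogonal_def inner_commute)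
  qed
  then show ?thesis
    using that x(1) by blast
qed

definition orthonormal_eigenset :: "complex^'n^'n \<Rightarrow> (complex^'n) set \<Rightarrow> bool" where
  "orthonormal_eigenset A F \<longleftrightarrow>
     (\<forall>f\<in>F. cinner f f = 1 \<and> (\<exists>l::real. A *v f = of_real l *s f)) \<and>
     (\<forall>f\<in>F. \<forall>g\<in>F. f \<noteq> g \<longrightarrow> cinner f g = 0)"

lemma orthonormal_eigenset_extend:
  fixes A :: "complex^'n^'n"
  assumes herm: "cadj A = A" and F: "orthonormal_eigenset A F" "finite F" "card F < CARD('n)"
  obtains v where "v \<notin> F" "orthonormal_eigenset A (insert v F)"
proof -
  define S where "S = {x. \<forall>f\<in>F. cinner f x = 0}"
  have "cinner f 0 = 0" for f :: "complex^'n"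
    by (simp add: cinner_def)
  then have S: "subspace S"
    unfolding subspace_def S_def by (simp add: cinner_add_right cinner_scaleR_right)
  have inv: "A *v x \<in> S" if "x \<in> S" for x
  proof -
    have "cinner f (A *v x) = 0" if "f \<in> F" for f
    proof -
      obtain l :: real where "A *v f = of_real l *s f"
        using F(1) \<open>f \<in> F\<close> unfolding orthonormal_eigenset_def by blast
      then show ?thesis
        using cinner_cadj[of f A x] herm \<open>x \<in> S\<close> \<open>f \<in> F\<close> by (simp add: S_def cinner_smult_left)
    qed
    then show ?thesis
      by (simp add: S_def)
  qed
  obtain x where "x \<noteq> 0" "x \<in> S"
  proof -
    obtain x where "x \<noteq> 0" "\<And>f. f \<in> F \<Longrightarrow> cinner f x = 0"
      using orthogonal_complement_nonzero[OF F(2,3)] by blast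
    then show ?thesis
      using that by (simp add: S_def)
  qed
  then obtain v l where v: "v \<in> S" "cinner v v = 1" "A *v v = of_real l *s v"
    using hermitian_eigenvector_in_subspace[OF herm S inv] by blast
  have "v \<notin> F"
    using v(1,2) by (auto simp: S_def)
  moreover have "cinner v f = 0" "cinner f v = 0" if "f \<in> F" for f
    using v(1) that cinner_commute[of v f] by (simp_all add: S_def)
  then have "orthonormal_eigenset A (insert v F)"
    using F(1) v(2,3) by (auto simp: orthonormal_eigenset_def)
  ultimately show ?thesis
    using that by blast
qed

lemma hermitian_orthonormal_eigenset_card:
  fixes A :: "complex^'n^'n"
  assumes herm: "cadj A = A"
  shows "m \<le> CARD('n) \<Longrightarrow> \<exists>F. finite F \<and> card F = m \<and> orthonormal_eigenset A F"
proof (induction m)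
  case 0
  show ?case
    by (intro exI[of _ "{}"]) (simp add: orthonormal_eigenset_def)
next
  case (Suc m)
  then obtain F where F: "finite F" "card F = m" "orthonormal_eigenset A F"
    by auto
  then obtain v where "v \<notin> F" "orthonormal_eigenset A (insert v F)"
    using orthonormal_eigenset_extend[OF herm F(3,1)] Suc.prems by auto
  then show ?case
    using F(1,2) by (intro exI[of _ "insert v F"]) simp
qed

lemma hermitian_orthonormal_eigenbasis:
  fixes A :: "complex^'n^'n"
  assumes herm: "cadj A = A"
  obtains g :: "'n \<Rightarrow> complex^'n" and l :: "'n \<Rightarrow> real"
  where "\<And>k k'. cinner (g k) (g k') = (if k = k' then 1 else 0)"
    and "\<And>k. A *v g k = of_real (l k) *s g k"
proof -
  obtain F where F: "finite F" "card F = CARD('n)" "orthonormal_eigenset A F"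
    using hermitian_orthonormal_eigenset_card[OF herm, of "CARD('n)"] by auto
  obtain g where g: "bij_betw g (UNIV :: 'n set) F"
    using finite_same_card_bij[of "UNIV :: 'n set" F] F(1,2) by auto
  then have gF: "g k \<in> F" and g_inj: "g k = g k' \<longleftrightarrow> k = k'" for k k'
    by (auto simp: bij_betw_def inj_eq)
  have "\<forall>k. \<exists>l::real. A *v g k = of_real l *s g k"
    using F(3) gF by (auto simp: orthonormal_eigenset_def)
  then obtain l where "\<And>k. A *v g k = of_real (l k) *s g k"
    by metis
  moreover have "cinner (g k) (g k') = (if k = k' then 1 else 0)" for k k'
    using F(3) gF[of k] gF[of k'] g_inj[of k k'] by (auto simp: orthonormal_eigenset_def)
  ultimately show ?thesis
    using that by blast
qed

section \<open>Bell-diagonal normal form\<close>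

lemma UNIV_2x2_cases: "(p::2\<times>2) = (1,1) \<or> p = (1,2) \<or> p = (2,1) \<or> p = (2,2)"
  using exhaust_2[of "fst p"] exhaust_2[of "snd p"] by (cases p) auto

(* Columns: the Bell states (|00\<rangle> + |11\<rangle>)/\<surd>2, (|00\<rangle> - |11\<rangle>)/\<surd>2,
  (|01\<rangle> + |10\<rangle>)/\<surd>2, (|01\<rangle> - |10\<rangle>)/\<surd>2. *)
definition bell_basis :: qqmat where
  "bell_basis = (\<chi> p k. let s = complex_of_real (1 / sqrt 2) in
     if k = (1,1) then (if p = (1,1) \<or> p = (2,2) then s else 0)
     else if k = (1,2) then (if p = (1,1) then s else if p = (2,2) then - s else 0)
     else if k = (2,1) then (if p = (1,2) \<or> p = (2,1) then s else 0)
     else (if p = (1,2) then s else if p = (2,1) then - s else 0))"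

definition diag_mat :: "('n \<Rightarrow> real) \<Rightarrow> complex^'n^'n" where
  "diag_mat l = (\<chi> k k'. if k = k' then of_real (l k) else 0)"

definition bell_diagonal :: "(2\<times>2 \<Rightarrow> real) \<Rightarrow> qqmat" where
  "bell_diagonal l = (\<chi> p q.
     if (p = (1,1) \<and> q = (1,1)) \<or> (p = (2,2) \<and> q = (2,2)) then of_real ((l (1,1) + l (1,2)) / 2)
     else if (p = (1,1) \<and> q = (2,2)) \<or> (p = (2,2) \<and> q = (1,1)) then of_real ((l (1,1) - l (1,2)) / 2)
     else if (p = (1,2) \<and> q = (1,2)) \<or> (p = (2,1) \<and> q = (2,1)) then of_real ((l (2,1) + l (2,2)) / 2)
     else if (p = (1,2) \<and> q = (2,1)) \<or> (p = (2,1) \<and> q = (1,2)) then of_real ((l (2,1) - l (2,2)) / 2)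
     else 0)"

lemma of_real_sqrt2_squares:
  "complex_of_real (1 / sqrt 2) * complex_of_real (1 / sqrt 2) = 1/2"
  "complex_of_real (sqrt 2) * complex_of_real (sqrt 2) = 2"
  by (simp_all flip: of_real_mult)

lemma unitary_bell_basis: "unitary_mat bell_basis"
proof -
  have "(\<Sum>k\<in>UNIV. bell_basis $ p $ k * cnj (bell_basis $ q $ k)) = (if p = q then 1 else 0)" for p q
    using UNIV_2x2_cases[of p] UNIV_2x2_cases[of q]
    by (auto simp: sum_UNIV_2x2 bell_basis_def Let_def of_real_sqrt2_squares)
  then have "bell_basis ** cadj bell_basis = mat 1"
    by (simp add: vec_eq_iff matrix_matrix_mult_def cadj_def mat_def)
  then show ?thesis
    using matrix_left_right_inverse by (auto simp: unitary_mat_def)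
qed

lemma bell_basis_diag_mat: "bell_basis ** diag_mat l ** cadj bell_basis = bell_diagonal l"
proof -
  have "(bell_basis ** diag_mat l ** cadj bell_basis) $ p $ q
      = (\<Sum>k\<in>UNIV. bell_basis $ p $ k * of_real (l k) * cnj (bell_basis $ q $ k))" for p q
    by (simp add: matrix_matrix_mult_def diag_mat_def cadj_def if_distrib cong: if_cong)
  moreover have "(\<Sum>k\<in>UNIV. bell_basis $ p $ k * of_real (l k) * cnj (bell_basis $ q $ k))
      = bell_diagonal l $ p $ q" for p q
    using UNIV_2x2_cases[of p] UNIV_2x2_cases[of q]
    by (auto simp: sum_UNIV_2x2 bell_basis_def bell_diagonal_def Let_def of_real_sqrt2_squares
        algebra_simps)
  ultimately show ?thesis
    by (simp add: vec_eq_iff)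
qed

lemma unitary_conj_bell_diagonal:
  fixes \<sigma> :: qqmat
  assumes herm: "cadj \<sigma> = \<sigma>"
  obtains U l where "unitary_mat U" "U ** \<sigma> ** cadj U = bell_diagonal l"
proof -
  obtain g :: "2\<times>2 \<Rightarrow> complex^(2\<times>2)" and l :: "2\<times>2 \<Rightarrow> real"
    where g: "\<And>k k'. cinner (g k) (g k') = (if k = k' then 1 else 0)"
      and eig: "\<And>k. \<sigma> *v g k = of_real (l k) *s g k"
    using hermitian_orthonormal_eigenbasis[OF herm] by blast
  define W :: qqmat where "W = (\<chi> i k. g k $ i)"
  have WW: "cadj W ** W = mat 1"
    using g by (simp add: vec_eq_iff W_def cadj_def matrix_matrix_mult_def cinner_def mat_def)
  then have WW': "W ** cadj W = mat 1"
    by (simp add: matrix_left_right_inverse)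
  have "(cadj W ** \<sigma> ** W) $ k $ k' = cinner (g k) (\<sigma> *v g k')" for k k'
  proof -
    have "(cadj W ** \<sigma> ** W) $ k $ k' = (\<Sum>j\<in>UNIV. \<Sum>i\<in>UNIV. cnj (g k $ i) * \<sigma> $ i $ j * g k' $ j)"
      by (simp add: W_def cadj_def matrix_matrix_mult_def sum_distrib_right)
    also have "\<dots> = (\<Sum>i\<in>UNIV. \<Sum>j\<in>UNIV. cnj (g k $ i) * \<sigma> $ i $ j * g k' $ j)"
      by (rule sum.swap)
    also have "\<dots> = cinner (g k) (\<sigma> *v g k')"
      by (simp add: cinner_def matrix_vector_mult_def sum_distrib_left mult_ac)
    finally show ?thesis .
  qed
  then have diag: "cadj W ** \<sigma> ** W = diag_mat l"
    using g eig by (simp add: vec_eq_iff diag_mat_def cinner_smult_right)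
  define U where "U = bell_basis ** cadj W"
  have cU: "cadj U = W ** cadj bell_basis"
    by (simp add: U_def cadj_mult)
  have B: "bell_basis ** cadj bell_basis = mat 1" "cadj bell_basis ** bell_basis = mat 1"
    using unitary_bell_basis by (auto simp: unitary_mat_def)
  have "U ** cadj U = bell_basis ** (cadj W ** W) ** cadj bell_basis"
    "cadj U ** U = W ** (cadj bell_basis ** bell_basis) ** cadj W"
    "U ** \<sigma> ** cadj U = bell_basis ** (cadj W ** \<sigma> ** W) ** cadj bell_basis"
    unfolding cU by (simp_all add: U_def matrix_mul_assoc)
  then have "unitary_mat U" "U ** \<sigma> ** cadj U = bell_diagonal l"
    using WW WW' B diag bell_basis_diag_mat by (simp_all add: unitary_mat_def)
  then show ?thesis
    using that by blast
qed

(* Each Bell state is an eigenvector of every s\<^sub>j \<otimes> s\<^sub>j with eigenvalue \<plusminus>1;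
  bell_correlation l j sums the weights l with these signs. *)
definition bell_correlation :: "(2\<times>2 \<Rightarrow> real) \<Rightarrow> 3 \<Rightarrow> real" where
  "bell_correlation l j = (if j = 1 then l (1,1) - l (1,2) + l (2,1) - l (2,2)
     else if j = 2 then - l (1,1) + l (1,2) + l (2,1) - l (2,2)
     else l (1,1) + l (1,2) - l (2,1) - l (2,2))"

lemma pauli_coeff_bell_diagonal_local:
  "pauli_coeff (bell_diagonal l) (Some j) None = 0"
  "pauli_coeff (bell_diagonal l) None (Some j) = 0"
  using exhaust_3[of j]
  by (auto simp: pauli_coeff_expand sum_UNIV_2x2 bell_diagonal_def pauli_entries field_simps)

lemma pauli_coeff_bell_diagonal:
  "pauli_coeff (bell_diagonal l) (Some j) (Some k) = (if j = k then of_real (bell_correlation l j) else 0)"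
  using exhaust_3[of j] exhaust_3[of k]
  by (auto simp: pauli_coeff_expand sum_UNIV_2x2 bell_diagonal_def pauli_entries bell_correlation_def)

lemma frob_sq_bell_diagonal:
  "4 * frob_sq (bell_diagonal l)
     = (cmod (trace (bell_diagonal l)))\<^sup>2 + (\<Sum>j\<in>UNIV. (bell_correlation l j)\<^sup>2)"
proof -
  have "(\<Sum>k\<in>UNIV. (cmod (pauli_coeff (bell_diagonal l) (Some j) (Some k)))\<^sup>2) = (bell_correlation l j)\<^sup>2"
    for j
  proof -
    have "(\<Sum>k\<in>UNIV. (cmod (pauli_coeff (bell_diagonal l) (Some j) (Some k)))\<^sup>2)
        = (\<Sum>k\<in>UNIV. if k = j then (bell_correlation l j)\<^sup>2 else 0)"
      by (rule sum.cong) (auto simp: pauli_coeff_bell_diagonal)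
    then show ?thesis
      by simp
  qed
  then show ?thesis
    unfolding pauli_coeff_parseval[symmetric]
    by (simp add: sum_UNIV_option pauli_coeff_None_None pauli_coeff_bell_diagonal_local)
qed

lemma trace_kron_bloch_bell_diagonal:
  "trace (bell_diagonal l ** kron (bloch u) (bloch v))
     = of_real (\<Sum>j\<in>UNIV. u $ j * v $ j * bell_correlation l j)"
proof -
  have "(\<Sum>k\<in>UNIV. of_real (u $ j * v $ k) * pauli_coeff (bell_diagonal l) (Some j) (Some k))
      = of_real (u $ j * v $ j * bell_correlation l j)" for j
    by (simp add: pauli_coeff_bell_diagonal if_distrib cong: if_cong)
  then show ?thesis
    by (simp add: trace_kron_bloch)
qed

lemma bell_diagonal_violation:
  assumes tr: "trace (bell_diagonal l) = 1" and frob: "4 * frob_sq (bell_diagonal l) > 2"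
  obtains u v :: "3 \<Rightarrow> real^3"
  where "\<forall>i. norm (u i) = 1" "orthonormal_frame v"
    "cmod (\<Sum>i\<in>UNIV. trace (bell_diagonal l ** kron (bloch (u i)) (bloch (v i)))) > sqrt 3"
proof -
  define t where "t = bell_correlation l"
  have big: "(\<Sum>k\<in>UNIV. (t k)\<^sup>2) > 1"
    using frob_sq_bell_diagonal[of l] frob tr by (simp add: t_def)
  obtain u v :: "3 \<Rightarrow> real^3" where u: "\<forall>i. norm (u i) = 1" and v: "orthonormal_frame v"
    and corr: "(\<Sum>i\<in>UNIV. \<Sum>j\<in>UNIV. u i $ j * v i $ j * t j) = sqrt (3 * (\<Sum>k\<in>UNIV. (t k)\<^sup>2))"
    using frame_diagonal_value[of t] big by auto
  have "cmod (\<Sum>i\<in>UNIV. trace (bell_diagonal l ** kron (bloch (u i)) (bloch (v i))))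
      = sqrt (3 * (\<Sum>k\<in>UNIV. (t k)\<^sup>2))"
    unfolding trace_kron_bloch_bell_diagonal of_real_sum[symmetric] t_def[symmetric] corr
    using big by simp
  also have "\<dots> > sqrt 3"
    using big by simp
  finally show ?thesis
    using that u v by blast
qed

lemma AUS3_if_frob_sq_le:
  assumes dens: "density_mat \<sigma>" and small: "4 * frob_sq \<sigma> \<le> 2"
  shows "\<sigma> \<in> AUS3"
  unfolding AUS3_def
proof (intro CollectI conjI allI impI dens)
  fix U :: qqmat and u v :: "3 \<Rightarrow> real^3"
  assume "unitary_mat U \<and> (\<forall>i. norm (u i) = 1) \<and> (\<forall>i. norm (v i) = 1) \<and>
    (\<forall>i j. i \<noteq> j \<longrightarrow> v i \<bullet> v j = 0)"
  then have U: "unitary_mat U" and u: "\<forall>i. norm (u i) = 1" and v: "orthonormal_frame v"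
    by (auto simp: orthonormal_frame_def)
  have "trace (U ** \<sigma> ** cadj U) = 1"
    using trace_unitary_conj[OF U] dens by (simp add: density_mat_def)
  moreover have "4 * frob_sq (U ** \<sigma> ** cadj U) \<le> 2"
    using frob_sq_unitary_conj[OF U] small by simp
  ultimately have "cmod (\<Sum>i\<in>UNIV. trace (U ** \<sigma> ** cadj U ** kron (bloch (u i)) (bloch (v i)))) \<le> sqrt 3"
    using correlation_sum_le_sqrt3 u v by blast
  then show "1 / sqrt 3 * cmod (\<Sum>i\<in>UNIV. trace (U ** \<sigma> ** cadj U ** kron (bloch (u i)) (bloch (v i)))) \<le> 1"
    by (simp add: divide_le_eq)
qed

lemma frob_sq_le_if_AUS3:
  assumes dens: "density_mat \<sigma>" and aus: "\<sigma> \<in> AUS3"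
  shows "4 * frob_sq \<sigma> \<le> 2"
proof (rule ccontr)
  assume big: "\<not> 4 * frob_sq \<sigma> \<le> 2"
  have "cadj \<sigma> = \<sigma>"
    using dens by (simp add: density_mat_def hermitian_mat_def)
  then obtain U l where U: "unitary_mat U" and R: "U ** \<sigma> ** cadj U = bell_diagonal l"
    by (rule unitary_conj_bell_diagonal)
  have "trace (bell_diagonal l) = 1"
    using trace_unitary_conj[OF U, of \<sigma>] dens unfolding R by (simp add: density_mat_def)
  moreover have "4 * frob_sq (bell_diagonal l) > 2"
    using frob_sq_unitary_conj[OF U, of \<sigma>] big R by simp
  ultimately obtain u v :: "3 \<Rightarrow> real^3" where u: "\<forall>i. norm (u i) = 1" and v: "orthonormal_frame v"
    and violation: "cmod (\<Sum>i\<in>UNIV. trace (bell_diagonal l ** kron (bloch (u i)) (bloch (v i)))) > sqrt 3"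
    by (rule bell_diagonal_violation)
  have "1 / sqrt 3 * cmod (\<Sum>i\<in>UNIV. trace (bell_diagonal l ** kron (bloch (u i)) (bloch (v i)))) \<le> 1"
    using aus U u v unfolding AUS3_def orthonormal_frame_def R[symmetric] by blast
  then show False
    using violation by (simp add: divide_le_eq)
qed

theorem mainTheorem6:
  fixes \<sigma> :: qqmat and e f :: "real^3" and G :: "real^3^3"
  assumes "density_mat \<sigma>"
    and "\<sigma> = two_qubit_repr e f G"
  shows "\<sigma> \<in> AUS3 \<longleftrightarrow>
    (1 + (norm e)\<^sup>2 + (norm f)\<^sup>2 + (\<Sum>i\<in>UNIV. \<Sum>j\<in>UNIV. (G $ i $ j)\<^sup>2)) / 4 \<le> 1 / 2"
proof -
  have "\<sigma> \<in> AUS3 \<longleftrightarrow> 4 * frob_sq \<sigma> \<le> 2"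
    using AUS3_if_frob_sq_le frob_sq_le_if_AUS3 assms(1) by blast
  also have "\<dots> \<longleftrightarrow> frob_sq \<sigma> \<le> 1 / 2"
    by (simp add: mult.commute)
  also have "frob_sq \<sigma> = (1 + (norm e)\<^sup>2 + (norm f)\<^sup>2 + (\<Sum>i\<in>UNIV. \<Sum>j\<in>UNIV. (G $ i $ j)\<^sup>2)) / 4"
    using frob_sq_two_qubit_repr[of e f G] assms(2) by simp
  finally show ?thesis .
qed

end
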